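(* Let $\mathcal{H}$ and $\mathcal{K}$ be finite-dimensional complex Hilbert spaces and let $\Psi: B(\mathcal{H})\to B(\mathcal{K})$ be a Hermitian-preserving trace-preserving linear map. Then the following are equivalent: (1) $\Psi$ is semi-nonnegative; (2) there exist CPTP maps $\Phi: B(\mathcal{H})\to B(\mathcal{H})$ and $\Xi: B(\mathcal{H})\to B(\mathcal{K})$ such that $\Psi\circ\Phi=\Xi$.
   Context: $B(\mathcal{H})$ denotes the space of all linear operators on $\mathcal{H}$. A density matrix is a positive semidefinite operator of trace one. A linear map $\Psi$ is Hermitian-preserving if $\Psi(X^\dagger)=\Psi(X)^\dagger$ for all $X$ and trace-preserving if $\operatorname{Tr}\Psi(X)=\operatorname{Tr}X$. A Hermitian-preserving trace-preserving map $\Psi: B(\mathcal{H})\to B(\mathcal{K})$ is semi-nonnegative (SN) if there exists a density matrix $\rho\in B(\mathcal{H})$ such that $\Psi(\rho)$ is a density matrix. *)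

theory Defs
  imports "Jordan_Normal_Form.Matrix"
begin

text \<open>B(H) with dim H = n is modelled as the complex n x n matrices (carrier_mat n n).\<close>

definition mtrace :: "complex mat \<Rightarrow> complex" where
  "mtrace A = (\<Sum>i<dim_row A. A $$ (i, i))"

definition madj :: "complex mat \<Rightarrow> complex mat" where
  "madj A = mat (dim_col A) (dim_row A) (\<lambda>(i, j). cnj (A $$ (j, i)))"

definition lin_map :: "nat \<Rightarrow> nat \<Rightarrow> (complex mat \<Rightarrow> complex mat) \<Rightarrow> bool" where
  "lin_map n m \<Psi> \<longleftrightarrow>
     (\<forall>A \<in> carrier_mat n n. \<Psi> A \<in> carrier_mat m m) \<and>
     (\<forall>A \<in> carrier_mat n n. \<forall>B \<in> carrier_mat n n. \<Psi> (A + B) = \<Psi> A + \<Psi> B) \<and>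
     (\<forall>A \<in> carrier_mat n n. \<forall>c. \<Psi> (c \<cdot>\<^sub>m A) = c \<cdot>\<^sub>m \<Psi> A)"

definition herm_preserving :: "nat \<Rightarrow> (complex mat \<Rightarrow> complex mat) \<Rightarrow> bool" where
  "herm_preserving n \<Psi> \<longleftrightarrow> (\<forall>X \<in> carrier_mat n n. \<Psi> (madj X) = madj (\<Psi> X))"

definition trace_preserving :: "nat \<Rightarrow> (complex mat \<Rightarrow> complex mat) \<Rightarrow> bool" where
  "trace_preserving n \<Psi> \<longleftrightarrow> (\<forall>X \<in> carrier_mat n n. mtrace (\<Psi> X) = mtrace X)"

definition psd :: "nat \<Rightarrow> complex mat \<Rightarrow> bool" where
  "psd d A \<longleftrightarrow> A \<in> carrier_mat d d \<and> madj A = A \<and>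
     (\<forall>v \<in> carrier_vec d. (conjugate v \<bullet> (A *\<^sub>v v)) \<in> \<real> \<and> Re (conjugate v \<bullet> (A *\<^sub>v v)) \<ge> 0)"

definition density :: "nat \<Rightarrow> complex mat \<Rightarrow> bool" where
  "density d \<rho> \<longleftrightarrow> psd d \<rho> \<and> mtrace \<rho> = 1"

text \<open>Ampliation id_k \<otimes> \<Psi> on B(C^k \<otimes> C^n), with basis e_i \<otimes> e_a indexed by i*n + a:
  the (i,j) block of the output is \<Psi> applied to the (i,j) block of the input.\<close>
definition ampl :: "nat \<Rightarrow> nat \<Rightarrow> nat \<Rightarrow> (complex mat \<Rightarrow> complex mat) \<Rightarrow> complex mat \<Rightarrow> complex mat" where
  "ampl k n m \<Psi> X = mat (k * m) (k * m) (\<lambda>(p, q).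
      \<Psi> (mat n n (\<lambda>(a, b). X $$ ((p div m) * n + a, (q div m) * n + b))) $$ (p mod m, q mod m))"

definition completely_positive :: "nat \<Rightarrow> nat \<Rightarrow> (complex mat \<Rightarrow> complex mat) \<Rightarrow> bool" where
  "completely_positive n m \<Phi> \<longleftrightarrow>
     (\<forall>k. \<forall>X. psd (k * n) X \<longrightarrow> psd (k * m) (ampl k n m \<Phi> X))"

definition cptp :: "nat \<Rightarrow> nat \<Rightarrow> (complex mat \<Rightarrow> complex mat) \<Rightarrow> bool" where
  "cptp n m \<Phi> \<longleftrightarrow> lin_map n m \<Phi> \<and> completely_positive n m \<Phi> \<and> trace_preserving n \<Phi>"

definition semi_nonnegative :: "nat \<Rightarrow> nat \<Rightarrow> (complex mat \<Rightarrow> complex mat) \<Rightarrow> bool" where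
  "semi_nonnegative n m \<Psi> \<longleftrightarrow> (\<exists>\<rho>. density n \<rho> \<and> density m (\<Psi> \<rho>))"

end

theory Submission
  imports Defs
begin

text \<open>If \<open>\<rho>\<close> and \<open>\<Psi>(\<rho>)\<close> are states, take the replacement channels
  \<open>\<Phi>(X) = tr(X) \<rho>\<close> and \<open>\<Xi>(X) = tr(X) \<Psi>(\<rho>)\<close>; linearity of \<open>\<Psi>\<close> gives \<open>\<Psi> \<circ> \<Phi> = \<Xi>\<close>.
  Conversely, CPTP maps send states to states, so for any state \<open>\<rho>\<close> both \<open>\<Phi>(\<rho>)\<close> and
  \<open>\<Psi>(\<Phi>(\<rho>)) = \<Xi>(\<rho>)\<close> are states.

  The substance is that replacement channels are completely positive: \<open>id\<^sub>k \<otimes> \<Phi>\<close> sends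
  \<open>X\<close> to \<open>tr\<^sub>2(X) \<otimes> \<sigma>\<close>, partial traces of positive semidefinite matrices are positive
  semidefinite, and so are Kronecker products, as one sees by writing \<open>\<sigma> = \<Sum>\<^sub>l f\<^sub>l f\<^sub>l\<^sup>*\<close>.
  That rank-one decomposition comes from repeatedly subtracting the Schur complement at a pivot.\<close>

text \<open>Matrices are handled as index functions on \<open>{..<d}\<close>, which keeps block manipulations
  index arithmetic. Complex numbers are ordered componentwise, so \<open>0 \<le> z\<close> says that \<open>z\<close> is a
  nonnegative real.\<close>

definition quad_form :: "nat \<Rightarrow> (nat \<Rightarrow> nat \<Rightarrow> complex) \<Rightarrow> (nat \<Rightarrow> complex) \<Rightarrow> complex" where
  "quad_form d A v = (\<Sum>a<d. \<Sum>b<d. cnj (v a) * A a b * v b)"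

definition psd_kernel :: "nat \<Rightarrow> (nat \<Rightarrow> nat \<Rightarrow> complex) \<Rightarrow> bool" where
  "psd_kernel d A \<longleftrightarrow> (\<forall>a<d. \<forall>b<d. A a b = cnj (A b a)) \<and> (\<forall>v. 0 \<le> quad_form d A v)"

lemma psd_kernelI:
  assumes "\<And>a b. a < d \<Longrightarrow> b < d \<Longrightarrow> A a b = cnj (A b a)" and "\<And>v. 0 \<le> quad_form d A v"
  shows "psd_kernel d A"
  using assms unfolding psd_kernel_def by blast

lemma psd_kernel_hermitian: "psd_kernel d A \<Longrightarrow> a < d \<Longrightarrow> b < d \<Longrightarrow> A a b = cnj (A b a)"
  unfolding psd_kernel_def by blast

lemma psd_kernel_quad_form_nonneg: "psd_kernel d A \<Longrightarrow> 0 \<le> quad_form d A v"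
  unfolding psd_kernel_def by blast

lemma quad_form_cong:
  "(\<And>a b. a < d \<Longrightarrow> b < d \<Longrightarrow> A a b = B a b) \<Longrightarrow> quad_form d A v = quad_form d B v"
  by (simp add: quad_form_def)

lemma psd_kernel_cong:
  assumes "\<And>a b. a < d \<Longrightarrow> b < d \<Longrightarrow> A a b = B a b" and "psd_kernel d A"
  shows "psd_kernel d B"
proof (rule psd_kernelI)
  show "B a b = cnj (B b a)" if "a < d" "b < d" for a b
  proof -
    have "B a b = A a b" by (rule assms(1)[OF that, symmetric])
    also have "\<dots> = cnj (A b a)" by (rule psd_kernel_hermitian[OF assms(2) that])
    also have "A b a = B b a" by (rule assms(1)[OF that(2,1)])
    finally show ?thesis .
  qed
  show "0 \<le> quad_form d B v" for v
  proof -
    have "quad_form d A v = quad_form d B v" by (rule quad_form_cong) (rule assms(1))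
    with psd_kernel_quad_form_nonneg[OF assms(2)] show ?thesis by metis
  qed
qed

lemma complex_nonneg_iff_Reals: "0 \<le> z \<longleftrightarrow> z \<in> \<real> \<and> 0 \<le> Re (z :: complex)"
  by (auto simp: less_eq_complex_def complex_is_Real_iff)

lemma scalar_prod_mult_mat_vec_eq_quad_form:
  assumes "M \<in> carrier_mat d d" "v \<in> carrier_vec d"
  shows "conjugate v \<bullet> (M *\<^sub>v v) = quad_form d (\<lambda>a b. M $$ (a, b)) (\<lambda>i. v $ i)"
proof -
  have "conjugate v \<bullet> (M *\<^sub>v v) = (\<Sum>a<d. cnj (v $ a) * (\<Sum>b<d. M $$ (a, b) * v $ b))"
    using assms by (auto simp: scalar_prod_def lessThan_atLeast0 intro!: sum.cong)
  then show ?thesis by (simp add: quad_form_def sum_distrib_left mult.assoc)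
qed

lemma madj_eq_self_iff:
  assumes M: "M \<in> carrier_mat d d"
  shows "madj M = M \<longleftrightarrow> (\<forall>a<d. \<forall>b<d. M $$ (a, b) = cnj (M $$ (b, a)))"
proof -
  have entry: "madj M $$ (a, b) = cnj (M $$ (b, a))" if "a < d" "b < d" for a b
    using M that by (simp add: madj_def)
  show ?thesis
  proof (intro iffI allI impI)
    fix a b assume "madj M = M" "a < d" "b < d"
    then show "M $$ (a, b) = cnj (M $$ (b, a))" using entry by metis
  next
    assume herm: "\<forall>a<d. \<forall>b<d. M $$ (a, b) = cnj (M $$ (b, a))"
    show "madj M = M"
    proof (rule eq_matI)
      fix a b assume "a < dim_row M" "b < dim_col M"
      then have ab: "a < d" "b < d" using M by auto
      show "madj M $$ (a, b) = M $$ (a, b)"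
        by (simp only: entry[OF ab] herm[rule_format, OF ab])
    qed (use M in \<open>simp_all add: madj_def\<close>)
  qed
qed

lemma psd_iff_psd_kernel: "psd d M \<longleftrightarrow> M \<in> carrier_mat d d \<and> psd_kernel d (\<lambda>a b. M $$ (a, b))"
proof (cases "M \<in> carrier_mat d d")
  case M: True
  have "(\<forall>v \<in> carrier_vec d. conjugate v \<bullet> (M *\<^sub>v v) \<in> \<real> \<and> 0 \<le> Re (conjugate v \<bullet> (M *\<^sub>v v))) \<longleftrightarrow>
        (\<forall>v. 0 \<le> quad_form d (\<lambda>a b. M $$ (a, b)) v)"
    unfolding complex_nonneg_iff_Reals[symmetric]
  proof
    assume nonneg: "\<forall>v \<in> carrier_vec d. 0 \<le> conjugate v \<bullet> (M *\<^sub>v v)"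
    show "\<forall>v. 0 \<le> quad_form d (\<lambda>a b. M $$ (a, b)) v"
    proof
      fix v
      have "quad_form d (\<lambda>a b. M $$ (a, b)) v = quad_form d (\<lambda>a b. M $$ (a, b)) (\<lambda>i. vec d v $ i)"
        by (simp add: quad_form_def)
      also have "\<dots> = conjugate (vec d v) \<bullet> (M *\<^sub>v vec d v)"
        using scalar_prod_mult_mat_vec_eq_quad_form[OF M] by simp
      finally show "0 \<le> quad_form d (\<lambda>a b. M $$ (a, b)) v"
        using nonneg by simp
    qed
  qed (simp add: scalar_prod_mult_mat_vec_eq_quad_form[OF M])
  then show ?thesis
    using M by (simp only: psd_def psd_kernel_def madj_eq_self_iff[OF M])
qed (simp add: psd_def)

lemma quad_form_unit_vector:
  assumes "q < d"
  shows "quad_form d A (\<lambda>i. if i = q then 1 else 0) = A q q"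
proof -
  have "quad_form d A (\<lambda>i. if i = q then 1 else 0) = (\<Sum>a<d. if a = q then A q q else 0)"
    unfolding quad_form_def using assms by (intro sum.cong refl) (simp add: if_distrib cong: if_cong)
  then show ?thesis using assms by simp
qed

lemma psd_kernel_diag_nonneg: "psd_kernel d A \<Longrightarrow> q < d \<Longrightarrow> 0 \<le> A q q"
  by (metis psd_kernel_quad_form_nonneg quad_form_unit_vector)

lemma quad_form_add_unit_vector:
  assumes "p < d"
  shows "quad_form d A (\<lambda>i. v i + (if i = p then t else 0)) =
    quad_form d A v + t * (\<Sum>a<d. cnj (v a) * A a p) + cnj t * (\<Sum>b<d. A p b * v b)
      + cnj t * t * A p p"
proof -
  have expand: "cnj (v a + (if a = p then t else 0)) * A a b * (v b + (if b = p then t else 0)) =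
     cnj (v a) * A a b * v b + (if b = p then t * (cnj (v a) * A a p) else 0)
     + (if a = p then cnj t * (A p b * v b) else 0)
     + (if a = p then if b = p then cnj t * t * A p p else 0 else 0)" for a b
    by (auto simp: algebra_simps)
  have "quad_form d A (\<lambda>i. v i + (if i = p then t else 0)) =
     (\<Sum>a<d. (\<Sum>b<d. cnj (v a) * A a b * v b) + t * (cnj (v a) * A a p)
        + (if a = p then cnj t * (\<Sum>b<d. A p b * v b) else 0)
        + (if a = p then cnj t * t * A p p else 0))"
    unfolding quad_form_def expand using assms
    by (intro sum.cong refl) (simp add: sum.distrib sum_distrib_left)
  then show ?thesis
    using assms by (simp add: sum.distrib sum_distrib_left quad_form_def)
qed

lemma psd_kernel_zero_diag:
  assumes A: "psd_kernel d A" and p: "p < d" and q: "q < d" and App: "A p p = 0"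
  shows "A p q = 0"
proof (rule ccontr)
  define c where "c = A p q"
  assume "A p q \<noteq> 0"
  then have c: "c \<noteq> 0" by (simp add: c_def)
  have Aqp: "A q p = cnj c"
    using psd_kernel_hermitian[OF A q p] by (simp add: c_def)
  have Aqq: "cnj (A q q) = A q q"
    using psd_kernel_hermitian[OF A q q] by (rule sym)
  let ?e = "\<lambda>i. if i = q then 1 else 0 :: complex"
  define t where "t = - (A q q + 1) / cnj c"
  have "(\<Sum>a<d. cnj (?e a) * A a p) = (\<Sum>a<d. if a = q then A a p else 0)"
    by (intro sum.cong refl) simp
  then have col: "(\<Sum>a<d. cnj (?e a) * A a p) = cnj c"
    using q Aqp by simp
  have row: "(\<Sum>b<d. A p b * ?e b) = c"
    using q by (simp add: c_def if_distrib cong: if_cong)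
  have "quad_form d A (\<lambda>i. ?e i + (if i = p then t else 0)) = A q q + t * cnj c + cnj t * c"
    using quad_form_add_unit_vector[OF p, of A ?e t] quad_form_unit_vector[OF q, of A] col row App
    by simp
  also have "\<dots> = - A q q - 2"
    using c Aqq by (simp add: t_def field_simps)
  finally have "quad_form d A (\<lambda>i. ?e i + (if i = p then t else 0)) = - A q q - 2" .
  moreover have "0 \<le> quad_form d A (\<lambda>i. ?e i + (if i = p then t else 0))"
    by (rule psd_kernel_quad_form_nonneg[OF A])
  moreover have "0 \<le> A q q" by (rule psd_kernel_diag_nonneg[OF A q])
  ultimately show False by (simp add: less_eq_complex_def)
qed

lemma psd_kernel_schur_complement:
  assumes A: "psd_kernel d A" and p: "p < d" and App: "A p p \<noteq> 0"
  shows "psd_kernel d (\<lambda>a b. A a b - A a p * cnj (A b p) / A p p)"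
proof (rule psd_kernelI)
  have App_real: "cnj (A p p) = A p p"
    using psd_kernel_hermitian[OF A p p] by (rule sym)
  show "A a b - A a p * cnj (A b p) / A p p = cnj (A b a - A b p * cnj (A a p) / A p p)"
    if "a < d" "b < d" for a b
    using psd_kernel_hermitian[OF A that] App_real by simp
  fix v
  define s where "s = (\<Sum>b<d. A p b * v b)"
  define t where "t = - s / A p p"
  have s_cnj: "(\<Sum>a<d. cnj (v a) * A a p) = cnj s"
    unfolding s_def by (simp add: psd_kernel_hermitian[OF A _ p] mult.commute)
  have s_col: "(\<Sum>b<d. cnj (A b p) * v b) = s"
    unfolding s_def by (intro sum.cong refl) (simp add: psd_kernel_hermitian[OF A p])
  have "quad_form d (\<lambda>a b. A a b - A a p * cnj (A b p) / A p p) v =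
      (\<Sum>a<d. \<Sum>b<d. cnj (v a) * A a b * v b - (cnj (v a) * A a p) * (cnj (A b p) * v b) / A p p)"
    unfolding quad_form_def by (intro sum.cong refl) (simp add: algebra_simps)
  also have "\<dots> = quad_form d A v - (\<Sum>a<d. cnj (v a) * A a p) * (\<Sum>b<d. cnj (A b p) * v b) / A p p"
    by (simp add: quad_form_def sum_subtractf sum_distrib_left sum_distrib_right sum_divide_distrib)
      (rule sum.swap)
  also have "\<dots> = quad_form d A v - cnj s * s / A p p"
    unfolding s_cnj s_col ..
  \<comment> \<open>completing the square\<close>
  also have "\<dots> = quad_form d A v + t * cnj s + cnj t * s + cnj t * t * A p p"
    using App App_real by (simp add: t_def field_simps)
  also have "\<dots> = quad_form d A (\<lambda>i. v i + (if i = p then t else 0))"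
    using quad_form_add_unit_vector[OF p, of A v t] s_cnj by (simp add: s_def)
  finally show "0 \<le> quad_form d (\<lambda>a b. A a b - A a p * cnj (A b p) / A p p) v"
    using psd_kernel_quad_form_nonneg[OF A] by simp
qed

text \<open>Subtracting \<open>g g\<^sup>*\<close> for this column \<open>g\<close> leaves the Schur complement at the pivot \<open>r\<close>.
  If \<open>A r r = 0\<close> then \<open>g = 0\<close>, by division by zero.\<close>

definition pivot_column :: "(nat \<Rightarrow> nat \<Rightarrow> complex) \<Rightarrow> nat \<Rightarrow> nat \<Rightarrow> complex" where
  "pivot_column A r a = A a r / complex_of_real (sqrt (Re (A r r)))"

lemma pivot_column_outer:
  assumes "psd_kernel d A" "r < d"
  shows "pivot_column A r a * cnj (pivot_column A r b) = A a r * cnj (A b r) / A r r"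
proof -
  have "0 \<le> A r r" by (rule psd_kernel_diag_nonneg[OF assms])
  then have "complex_of_real (Re (A r r)) = A r r" and "0 \<le> Re (A r r)"
    by (auto simp: complex_nonneg_iff_Reals)
  define s where "s = complex_of_real (sqrt (Re (A r r)))"
  have "s * s = A r r"
    using \<open>0 \<le> Re (A r r)\<close> \<open>complex_of_real (Re (A r r)) = A r r\<close>
    by (simp add: s_def flip: of_real_mult)
  moreover have "pivot_column A r a * cnj (pivot_column A r b) = A a r * cnj (A b r) / (s * s)"
    by (simp add: pivot_column_def s_def)
  ultimately show ?thesis by simp
qed

lemma psd_kernel_minus_pivot:
  assumes A: "psd_kernel d A" and r: "r < d"
  shows "psd_kernel d (\<lambda>a b. A a b - pivot_column A r a * cnj (pivot_column A r b))"
proof (cases "A r r = 0")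
  case True
  then show ?thesis using A by (simp add: pivot_column_outer[OF A r])
next
  case False
  then show ?thesis using psd_kernel_schur_complement[OF A r] by (simp add: pivot_column_outer[OF A r])
qed

lemma pivot_row:
  assumes A: "psd_kernel d A" and r: "r < d" and b: "b < d"
  shows "A r b = pivot_column A r r * cnj (pivot_column A r b)"
proof -
  have "A r b = A r r * cnj (A b r) / A r r"
  proof (cases "A r r = 0")
    case True
    then show ?thesis using psd_kernel_zero_diag[OF A r b] by simp
  next
    case False
    then have "A r r * cnj (A b r) / A r r = cnj (A b r)" by simp
    then show ?thesis using psd_kernel_hermitian[OF A r b] by simp
  qed
  also have "\<dots> = pivot_column A r r * cnj (pivot_column A r b)"
    by (rule pivot_column_outer[OF A r, symmetric])
  finally show ?thesis .
qed

lemma minus_pivot_eq_0: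
  assumes A: "psd_kernel d A" and r: "r < d"
    and below: "\<And>a b. a < d \<Longrightarrow> b < d \<Longrightarrow> Suc r \<le> a \<or> Suc r \<le> b \<Longrightarrow> A a b = 0"
    and ab: "a < d" "b < d" "r \<le> a \<or> r \<le> b"
  shows "A a b - pivot_column A r a * cnj (pivot_column A r b) = 0"
proof -
  let ?A' = "\<lambda>a b. A a b - pivot_column A r a * cnj (pivot_column A r b)"
  have row: "?A' r c = 0" if "c < d" for c
    using pivot_row[OF A r that] by simp
  consider "a = r" | "b = r" | "Suc r \<le> a" | "Suc r \<le> b"
    using ab(3) by linarith
  then show ?thesis
  proof cases
    case 1
    then show ?thesis using row[OF ab(2)] by simp
  next
    case 2
    have "?A' a b = cnj (?A' b a)"
      by (rule psd_kernel_hermitian[OF psd_kernel_minus_pivot[OF A r] ab(1,2)])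
    also have "?A' b a = 0" using 2 row[OF ab(1)] by simp
    finally show ?thesis by simp
  next
    case 3
    then have "A a b = 0" "A a r = 0" using below ab r by auto
    then show ?thesis by (simp add: pivot_column_def)
  next
    case 4
    then have "A a b = 0" "A b r = 0" using below ab r by auto
    then show ?thesis by (simp add: pivot_column_def)
  qed
qed

lemma psd_kernel_rank_one_sum_below:
  assumes "psd_kernel d A" and "\<And>a b. a < d \<Longrightarrow> b < d \<Longrightarrow> r \<le> a \<or> r \<le> b \<Longrightarrow> A a b = 0"
  shows "\<exists>(N :: nat) f. \<forall>a<d. \<forall>b<d. A a b = (\<Sum>l<N. f l a * cnj (f l b))"
  using assms
proof (induction r arbitrary: A)
  case 0
  then have "\<forall>a<d. \<forall>b<d. A a b = 0" by simp
  then show ?case by (intro exI[of _ "0 :: nat"]) simp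
next
  case (Suc r)
  show ?case
  proof (cases "r < d")
    case False
    then have "A a b = 0" if "a < d" "b < d" "r \<le> a \<or> r \<le> b" for a b
      using that by auto
    then show ?thesis by (rule Suc.IH[OF Suc.prems(1)])
  next
    case True
    let ?g = "pivot_column A r"
    obtain N :: nat and f
      where f: "\<forall>a<d. \<forall>b<d. A a b - ?g a * cnj (?g b) = (\<Sum>l<N. f l a * cnj (f l b))"
      using Suc.IH[OF psd_kernel_minus_pivot[OF Suc.prems(1) True]
          minus_pivot_eq_0[OF Suc.prems(1) True Suc.prems(2)]]
      by blast
    have "A a b = (\<Sum>l<Suc N. (f(N := ?g)) l a * cnj ((f(N := ?g)) l b))" if "a < d" "b < d" for a b
    proof -
      have "(\<Sum>l<N. (f(N := ?g)) l a * cnj ((f(N := ?g)) l b)) = (\<Sum>l<N. f l a * cnj (f l b))"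
        by (intro sum.cong refl) simp
      also have "\<dots> = A a b - ?g a * cnj (?g b)"
        using f that by simp
      finally show ?thesis by simp
    qed
    then show ?thesis by (intro exI[of _ "Suc N"] exI[of _ "f(N := ?g)"] allI impI)
  qed
qed

lemma psd_kernel_rank_one_sum:
  "psd_kernel d A \<Longrightarrow> \<exists>(N :: nat) f. \<forall>a<d. \<forall>b<d. A a b = (\<Sum>l<N. f l a * cnj (f l b))"
  using psd_kernel_rank_one_sum_below[of d A d] by auto

lemma quad_form_sum:
  "quad_form d (\<lambda>a b. \<Sum>l\<in>L. A l a b) v = (\<Sum>l\<in>L. quad_form d (A l) v)"
proof -
  have "quad_form d (\<lambda>a b. \<Sum>l\<in>L. A l a b) v = (\<Sum>a<d. \<Sum>b<d. \<Sum>l\<in>L. cnj (v a) * A l a b * v b)"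
    unfolding quad_form_def by (simp add: sum_distrib_left sum_distrib_right)
  also have "\<dots> = (\<Sum>l\<in>L. quad_form d (A l) v)"
    unfolding quad_form_def by (simp add: sum.swap[of _ "{..<d}" L])
  finally show ?thesis .
qed

lemma block_index_less: "i < k \<Longrightarrow> c < n \<Longrightarrow> i * n + c < k * (n :: nat)"
  by (simp add: div_less_iff_less_mult[symmetric])

lemma sum_lessThan_mult:
  "(\<Sum>p<k * m. g p) = (\<Sum>i<k. \<Sum>a<m. g (i * m + a :: nat))"
proof -
  have "(\<Sum>p<k * m. g p) = (\<Sum>i<k. \<Sum>p\<in>{i * m..<i * m + m}. g p)"
    by (rule sum.nat_group[symmetric])
  also have "\<dots> = (\<Sum>i<k. \<Sum>a<m. g (i * m + a))"
    by (subst sum.atLeastLessThan_shift_0) (simp add: atLeast0LessThan)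
  finally show ?thesis .
qed

lemma quad_form_blocks:
  "quad_form (k * m) A v =
    (\<Sum>i<k. \<Sum>a<m. \<Sum>j<k. \<Sum>b<m. cnj (v (i * m + a)) * A (i * m + a) (j * m + b) * v (j * m + b))"
  unfolding quad_form_def by (simp add: sum_lessThan_mult)

lemma quad_form_slice:
  assumes c: "c < n"
  shows "quad_form (k * n) Y (\<lambda>p. if p mod n = c then w (p div n) else 0) =
    (\<Sum>i<k. \<Sum>j<k. cnj (w i) * Y (i * n + c) (j * n + c) * w j)"
proof -
  let ?z = "\<lambda>p. if p mod n = c then w (p div n) else 0"
  let ?X = "\<lambda>i j. cnj (w i) * Y (i * n + c) (j * n + c) * w j"
  have inner: "(\<Sum>j<k. \<Sum>b<n. cnj (?z (i * n + a)) * Y (i * n + a) (j * n + b) * ?z (j * n + b)) =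
      (if a = c then (\<Sum>j<k. ?X i j) else 0)" if a: "a < n" for i a
  proof (cases "a = c")
    case True
    have "(\<Sum>j<k. \<Sum>b<n. cnj (?z (i * n + a)) * Y (i * n + a) (j * n + b) * ?z (j * n + b)) =
       (\<Sum>j<k. \<Sum>b<n. if b = c then ?X i j else 0)"
      using True a by (intro sum.cong refl) simp
    then show ?thesis using True c by simp
  qed (use a in simp)
  have "quad_form (k * n) Y ?z = (\<Sum>i<k. \<Sum>a<n. (if a = c then (\<Sum>j<k. ?X i j) else 0))"
    unfolding quad_form_blocks using inner by (intro sum.cong refl) simp
  then show ?thesis using c by simp
qed

lemma psd_kernel_partial_trace:
  assumes Y: "psd_kernel (k * n) Y"
  shows "psd_kernel k (\<lambda>i j. \<Sum>c<n. Y (i * n + c) (j * n + c))"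
proof (rule psd_kernelI)
  show "(\<Sum>c<n. Y (i * n + c) (j * n + c)) = cnj (\<Sum>c<n. Y (j * n + c) (i * n + c))"
    if "i < k" "j < k" for i j
    unfolding cnj_sum
    by (intro sum.cong refl psd_kernel_hermitian[OF Y] block_index_less) (use that in auto)
  fix w
  have "quad_form k (\<lambda>i j. \<Sum>c<n. Y (i * n + c) (j * n + c)) w =
      (\<Sum>i<k. \<Sum>j<k. \<Sum>c<n. cnj (w i) * Y (i * n + c) (j * n + c) * w j)"
    unfolding quad_form_def by (simp add: sum_distrib_left sum_distrib_right)
  also have "\<dots> = (\<Sum>c<n. \<Sum>i<k. \<Sum>j<k. cnj (w i) * Y (i * n + c) (j * n + c) * w j)"
    by (simp add: sum.swap[of _ "{..<k}" "{..<n}"])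
  also have "\<dots> = (\<Sum>c<n. quad_form (k * n) Y (\<lambda>p. if p mod n = c then w (p div n) else 0))"
    by (simp add: quad_form_slice)
  finally show "0 \<le> quad_form k (\<lambda>i j. \<Sum>c<n. Y (i * n + c) (j * n + c)) w"
    by (simp add: sum_nonneg psd_kernel_quad_form_nonneg[OF Y])
qed

lemma quad_form_kronecker_rank_one:
  "quad_form (k * m) (\<lambda>p q. T (p div m) (q div m) * (f (p mod m) * cnj (f (q mod m)))) v =
    quad_form k T (\<lambda>i. \<Sum>b<m. cnj (f b) * v (i * m + b))"
proof (cases "m = 0")
  case False
  have "quad_form (k * m) (\<lambda>p q. T (p div m) (q div m) * (f (p mod m) * cnj (f (q mod m)))) v =
      (\<Sum>i<k. \<Sum>a<m. \<Sum>j<k. \<Sum>b<m.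
        cnj (v (i * m + a)) * (T i j * (f a * cnj (f b))) * v (j * m + b))"
    unfolding quad_form_blocks using False by (intro sum.cong refl) simp
  also have "\<dots> = (\<Sum>i<k. \<Sum>j<k. \<Sum>a<m. \<Sum>b<m.
        cnj (v (i * m + a)) * (T i j * (f a * cnj (f b))) * v (j * m + b))"
    by (rule sum.cong[OF refl], rule sum.swap)
  also have "\<dots> = quad_form k T (\<lambda>i. \<Sum>b<m. cnj (f b) * v (i * m + b))"
    unfolding quad_form_def cnj_sum by (simp add: sum_distrib_left sum_distrib_right mult_ac)
  finally show ?thesis .
qed (simp add: quad_form_def)

lemma psd_kernel_kronecker:
  assumes T: "psd_kernel k T" and S: "psd_kernel m S"
  shows "psd_kernel (k * m) (\<lambda>p q. T (p div m) (q div m) * S (p mod m) (q mod m))"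
proof (rule psd_kernelI)
  fix p q assume pq: "p < k * m" "q < k * m"
  then have "0 < m" by (cases m) auto
  with pq have div: "p div m < k" "q div m < k" and mod: "p mod m < m" "q mod m < m"
    by (simp_all add: less_mult_imp_div_less)
  have "T (p div m) (q div m) = cnj (T (q div m) (p div m))"
    by (rule psd_kernel_hermitian[OF T div])
  moreover have "S (p mod m) (q mod m) = cnj (S (q mod m) (p mod m))"
    by (rule psd_kernel_hermitian[OF S mod])
  ultimately show "T (p div m) (q div m) * S (p mod m) (q mod m) =
      cnj (T (q div m) (p div m) * S (q mod m) (p mod m))"
    by (simp only: complex_cnj_mult)
next
  fix v
  obtain N :: nat and f where f: "\<forall>a<m. \<forall>b<m. S a b = (\<Sum>l<N. f l a * cnj (f l b))"
    using psd_kernel_rank_one_sum[OF S] by blast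
  have "quad_form (k * m) (\<lambda>p q. T (p div m) (q div m) * S (p mod m) (q mod m)) v =
      quad_form (k * m) (\<lambda>p q. \<Sum>l<N. T (p div m) (q div m) * (f l (p mod m) * cnj (f l (q mod m)))) v"
  proof (rule quad_form_cong)
    fix p q assume "p < k * m" "q < k * m"
    then have "p mod m < m" "q mod m < m" by (cases m; simp)+
    then show "T (p div m) (q div m) * S (p mod m) (q mod m) =
        (\<Sum>l<N. T (p div m) (q div m) * (f l (p mod m) * cnj (f l (q mod m))))"
      using f by (simp add: sum_distrib_left)
  qed
  also have "\<dots> = (\<Sum>l<N. quad_form k T (\<lambda>i. \<Sum>b<m. cnj (f l b) * v (i * m + b)))"
    by (simp add: quad_form_sum quad_form_kronecker_rank_one)
  finally show "0 \<le> quad_form (k * m) (\<lambda>p q. T (p div m) (q div m) * S (p mod m) (q mod m)) v"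
    by (simp add: sum_nonneg psd_kernel_quad_form_nonneg[OF T])
qed

lemma mtrace_add: "A \<in> carrier_mat n n \<Longrightarrow> B \<in> carrier_mat n n \<Longrightarrow> mtrace (A + B) = mtrace A + mtrace B"
  unfolding mtrace_def by (simp add: sum.distrib)

lemma mtrace_smult: "A \<in> carrier_mat n n \<Longrightarrow> mtrace (c \<cdot>\<^sub>m A) = c * mtrace A"
  unfolding mtrace_def by (simp add: sum_distrib_left)

definition replacement_channel :: "complex mat \<Rightarrow> complex mat \<Rightarrow> complex mat" where
  "replacement_channel \<sigma> X = mtrace X \<cdot>\<^sub>m \<sigma>"

lemma ampl_replacement_channel:
  assumes "\<sigma> \<in> carrier_mat m m" and "p < k * m" "q < k * m"
  shows "ampl k n m (replacement_channel \<sigma>) X $$ (p, q) =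
    (\<Sum>c<n. X $$ (p div m * n + c, q div m * n + c)) * \<sigma> $$ (p mod m, q mod m)"
proof -
  have "0 < m" using assms(2) by (cases m) auto
  then show ?thesis
    using assms unfolding ampl_def replacement_channel_def mtrace_def by simp
qed

lemma replacement_channel_completely_positive:
  assumes "psd m \<sigma>"
  shows "completely_positive n m (replacement_channel \<sigma>)"
  unfolding completely_positive_def
proof (intro allI impI)
  fix k X assume "psd (k * n) X"
  then have "psd_kernel (k * n) (\<lambda>a b. X $$ (a, b))"
    by (simp add: psd_iff_psd_kernel)
  then have X: "psd_kernel k (\<lambda>i j. \<Sum>c<n. X $$ (i * n + c, j * n + c))"
    by (rule psd_kernel_partial_trace)
  have \<sigma>: "\<sigma> \<in> carrier_mat m m" "psd_kernel m (\<lambda>a b. \<sigma> $$ (a, b))"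
    using assms by (simp_all add: psd_iff_psd_kernel)
  from psd_kernel_kronecker[OF X \<sigma>(2)] have "psd_kernel (k * m) (\<lambda>p q. ampl k n m (replacement_channel \<sigma>) X $$ (p, q))"
    by (rule psd_kernel_cong[rotated]) (simp add: ampl_replacement_channel[OF \<sigma>(1)])
  then show "psd (k * m) (ampl k n m (replacement_channel \<sigma>) X)"
    by (simp add: psd_iff_psd_kernel ampl_def)
qed

lemma replacement_channel_cptp:
  assumes "density m \<sigma>"
  shows "cptp n m (replacement_channel \<sigma>)"
proof -
  have \<sigma>: "\<sigma> \<in> carrier_mat m m" "psd m \<sigma>" "mtrace \<sigma> = 1"
    using assms by (auto simp: density_def psd_def)
  have "lin_map n m (replacement_channel \<sigma>)"
    unfolding lin_map_def replacement_channel_def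
    using \<sigma>(1) by (auto simp: mtrace_add mtrace_smult add_smult_distrib_right_mat intro!: eq_matI)
  moreover have "trace_preserving n (replacement_channel \<sigma>)"
    unfolding trace_preserving_def replacement_channel_def using \<sigma> by (simp add: mtrace_smult)
  ultimately show ?thesis
    unfolding cptp_def using replacement_channel_completely_positive[OF \<sigma>(2)] by blast
qed

lemma ampl_one:
  assumes "lin_map n m \<Phi>" and "X \<in> carrier_mat n n"
  shows "ampl 1 n m \<Phi> X = \<Phi> X"
proof -
  have "mat n n (\<lambda>(a, b). X $$ (0 * n + a, 0 * n + b)) = X"
    using assms(2) by (auto intro!: eq_matI)
  moreover have "\<Phi> X \<in> carrier_mat m m"
    using assms unfolding lin_map_def by blast
  ultimately show ?thesis
    unfolding ampl_def by (auto intro!: eq_matI)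
qed

lemma cptp_density:
  assumes "cptp n m \<Phi>" and "density n \<rho>"
  shows "density m (\<Phi> \<rho>)"
proof -
  have \<rho>: "psd (1 * n) \<rho>" "\<rho> \<in> carrier_mat n n" "mtrace \<rho> = 1"
    using assms(2) by (auto simp: density_def psd_def)
  have "psd (1 * m) (ampl 1 n m \<Phi> \<rho>)"
    using assms(1) \<rho>(1) unfolding cptp_def completely_positive_def by blast
  moreover have "ampl 1 n m \<Phi> \<rho> = \<Phi> \<rho>"
    using assms(1) \<rho>(2) unfolding cptp_def by (blast intro: ampl_one)
  ultimately have "psd m (\<Phi> \<rho>)" by simp
  moreover have "mtrace (\<Phi> \<rho>) = 1"
    using assms(1) \<rho>(2,3) unfolding cptp_def trace_preserving_def by simp
  ultimately show ?thesis unfolding density_def by blast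
qed

lemma density_exists:
  assumes "0 < n"
  shows "\<exists>\<rho>. density n \<rho>"
proof -
  define E :: "complex mat" where "E = mat n n (\<lambda>(i, j). if i = 0 \<and> j = 0 then 1 else 0)"
  have "quad_form n (\<lambda>a b. E $$ (a, b)) v = cnj (v 0) * v 0" for v
  proof -
    have "quad_form n (\<lambda>a b. E $$ (a, b)) v =
        (\<Sum>a<n. \<Sum>b<n. if a = 0 then (if b = 0 then cnj (v 0) * v 0 else 0) else 0)"
      unfolding quad_form_def E_def by (intro sum.cong refl) auto
    also have "\<dots> = (\<Sum>a<n. if a = 0 then cnj (v 0) * v 0 else 0)"
      using assms by (intro sum.cong refl) auto
    finally show ?thesis using assms by simp
  qed
  moreover have "0 \<le> cnj z * z" for z :: complex
    using conjugate_square_positive[of z] by (simp add: mult.commute)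
  ultimately have "psd n E"
    unfolding psd_iff_psd_kernel psd_kernel_def by (auto simp: E_def)
  moreover have "mtrace E = 1"
    using assms unfolding mtrace_def E_def by (simp add: if_distrib cong: if_cong)
  ultimately show ?thesis unfolding density_def by blast
qed

theorem theorem2:
  fixes n m :: nat and \<Psi> :: "complex mat \<Rightarrow> complex mat"
  assumes "n > 0"
    and "lin_map n m \<Psi>" and "herm_preserving n \<Psi>" and "trace_preserving n \<Psi>"
  shows "semi_nonnegative n m \<Psi> \<longleftrightarrow>
         (\<exists>\<Phi> \<Xi>. cptp n n \<Phi> \<and> cptp n m \<Xi> \<and> (\<forall>X \<in> carrier_mat n n. \<Psi> (\<Phi> X) = \<Xi> X))"
proof
  assume "semi_nonnegative n m \<Psi>"
  then obtain \<rho> where \<rho>: "density n \<rho>" and \<Psi>\<rho>: "density m (\<Psi> \<rho>)"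
    unfolding semi_nonnegative_def by blast
  have "\<Psi> (replacement_channel \<rho> X) = replacement_channel (\<Psi> \<rho>) X" for X
    using assms(2) \<rho> unfolding lin_map_def replacement_channel_def density_def psd_def by blast
  then show "\<exists>\<Phi> \<Xi>. cptp n n \<Phi> \<and> cptp n m \<Xi> \<and> (\<forall>X \<in> carrier_mat n n. \<Psi> (\<Phi> X) = \<Xi> X)"
    using replacement_channel_cptp[OF \<rho>] replacement_channel_cptp[OF \<Psi>\<rho>] by blast
next
  assume "\<exists>\<Phi> \<Xi>. cptp n n \<Phi> \<and> cptp n m \<Xi> \<and> (\<forall>X \<in> carrier_mat n n. \<Psi> (\<Phi> X) = \<Xi> X)"
  then obtain \<Phi> \<Xi> where \<Phi>: "cptp n n \<Phi>" and \<Xi>: "cptp n m \<Xi>"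
    and comp: "\<forall>X \<in> carrier_mat n n. \<Psi> (\<Phi> X) = \<Xi> X"
    by blast
  obtain \<rho> where \<rho>: "density n \<rho>"
    using density_exists[OF assms(1)] by blast
  then have "\<rho> \<in> carrier_mat n n" by (simp add: density_def psd_def)
  then have "density m (\<Psi> (\<Phi> \<rho>))"
    using comp cptp_density[OF \<Xi> \<rho>] by simp
  with cptp_density[OF \<Phi> \<rho>] show "semi_nonnegative n m \<Psi>"
    unfolding semi_nonnegative_def by blast
qed

end
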